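(* Let $p$ be an odd prime, $\lambda$ a partition, and suppose that for some abacus display of $\lambda$ the runners $i,j\in\{0,\dots,p-1\}$ satisfy conditions (F1), (F2), (F3). If $\kappa_p(\lambda)\ne\lambda$, then $i\ne j$.
   Context: Abacus: for $\lambda$ with at most $s$ nonzero parts, $\beta_k=\lambda_k-k+s$ ($1\le k\le s$). Position $q\ge0$ lies on runner $q\bmod p$ and is occupied iff $q$ equals some $\beta_k$. For runner $t$, $\lambda^{(t)}$ is the partition whose $m$-th part is the number of unoccupied positions on runner $t$ smaller than the $m$-th largest occupied position on runner $t$. (F1) $\lambda^{(k)}=\varnothing$ for all $k\notin\{i,j\}$; (F2) if position $i+ap$ is unoccupied then every position $b>i+ap$ not on runner $i$ is unoccupied; (F3) if position $j+cp$ is occupied then every position $d<j+cp$ not on runner $j$ is occupied. $\kappa_p(\lambda)$ is the $p$-core of $\lambda$. *)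

theory Defs
  imports Main "HOL-Computational_Algebra.Primes"
begin

definition is_partition :: "nat list \<Rightarrow> bool" where
  "is_partition la \<longleftrightarrow> sorted (rev la) \<and> 0 \<notin> set la"

(* k-th part, 1-indexed; 0 beyond the length *)
definition part :: "nat list \<Rightarrow> nat \<Rightarrow> nat" where
  "part la k = (if 1 \<le> k \<and> k \<le> length la then la ! (k - 1) else 0)"

(* bead positions of the abacus display with s beads:
   beta_k = lambda_k - k + s, 1 <= k <= s *)
definition beads :: "nat list \<Rightarrow> nat \<Rightarrow> nat set" where
  "beads la s = {part la k + s - k | k. 1 \<le> k \<and> k \<le> s}"

definition occupied :: "nat list \<Rightarrow> nat \<Rightarrow> nat \<Rightarrow> bool" where
  "occupied la s q \<longleftrightarrow> q \<in> beads la s"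

(* lambda^(t): m-th part is the number of unoccupied positions on runner t
   smaller than the m-th largest occupied position on runner t;
   zero parts are discarded (a partition has positive parts). *)
definition runner_partition :: "nat \<Rightarrow> nat list \<Rightarrow> nat \<Rightarrow> nat \<Rightarrow> nat list" where
  "runner_partition p la s t =
     filter (\<lambda>x. x \<noteq> 0)
       (map (\<lambda>x. card {q. q < x \<and> q mod p = t \<and> \<not> occupied la s q})
            (rev (sorted_list_of_set {q \<in> beads la s. q mod p = t})))"

(* Young diagram, cells (row, column), 0-indexed *)
definition young :: "nat list \<Rightarrow> (nat \<times> nat) set" where
  "young la = {(r, c). r < length la \<and> c < la ! r}"

definition cell_adj :: "nat \<times> nat \<Rightarrow> nat \<times> nat \<Rightarrow> bool" where
  "cell_adj x y \<longleftrightarrow>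
     (fst x = fst y \<and> (snd y = Suc (snd x) \<or> snd x = Suc (snd y))) \<or>
     (snd x = snd y \<and> (fst y = Suc (fst x) \<or> fst x = Suc (fst y)))"

definition removes_rim_hook :: "nat \<Rightarrow> nat list \<Rightarrow> nat list \<Rightarrow> bool" where
  "removes_rim_hook p la mu \<longleftrightarrow>
     is_partition mu \<and> young mu \<subseteq> young la \<and>
     (let S = young la - young mu in
        card S = p \<and>
        (\<forall>x\<in>S. \<forall>y\<in>S. (\<lambda>a b. a \<in> S \<and> b \<in> S \<and> cell_adj a b)\<^sup>*\<^sup>* x y) \<and>
        \<not> (\<exists>r c. (r, c) \<in> S \<and> (r, Suc c) \<in> S \<and> (Suc r, c) \<in> S \<and> (Suc r, Suc c) \<in> S))"

inductive core_of :: "nat \<Rightarrow> nat list \<Rightarrow> nat list \<Rightarrow> bool" for p where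
  stop: "\<not> (\<exists>mu. removes_rim_hook p la mu) \<Longrightarrow> core_of p la la"
| step: "removes_rim_hook p la mu \<Longrightarrow> core_of p mu ka \<Longrightarrow> core_of p la ka"

definition p_core :: "nat \<Rightarrow> nat list \<Rightarrow> nat list" where
  "p_core p la = (THE ka. core_of p la ka)"

definition F1 :: "nat \<Rightarrow> nat list \<Rightarrow> nat \<Rightarrow> nat \<Rightarrow> nat \<Rightarrow> bool" where
  "F1 p la s i j \<longleftrightarrow> (\<forall>k<p. k \<notin> {i, j} \<longrightarrow> runner_partition p la s k = [])"

definition F2 :: "nat \<Rightarrow> nat list \<Rightarrow> nat \<Rightarrow> nat \<Rightarrow> bool" where
  "F2 p la s i \<longleftrightarrow> (\<forall>a b. \<not> occupied la s (i + a * p) \<longrightarrow> b > i + a * p \<longrightarrow>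
                        b mod p \<noteq> i \<longrightarrow> \<not> occupied la s b)"

definition F3 :: "nat \<Rightarrow> nat list \<Rightarrow> nat \<Rightarrow> nat \<Rightarrow> bool" where
  "F3 p la s j \<longleftrightarrow> (\<forall>c d. occupied la s (j + c * p) \<longrightarrow> d < j + c * p \<longrightarrow>
                        d mod p \<noteq> j \<longrightarrow> occupied la s d)"

end

theory Submission imports Defs begin

text \<open>If \<open>i = j\<close>, conditions (F1)--(F3) say that on every runner the beads sit at the bottom,
so a bead at \<open>b \<ge> p\<close> always has a bead at \<open>b - p\<close>. On the other hand, removing a \<open>p\<close>-rim hook
occupying rows \<open>r..t\<close> moves the bead \<open>\<beta>\<^sub>r\<close> to the empty position \<open>\<beta>\<^sub>r - p\<close>: the contents
\<open>c - r\<close> of the hook cells are pairwise distinct (there is no \<open>2 \<times> 2\<close> square) and, the hook being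
connected, form an interval, which squeezes \<open>\<beta>\<^sub>r - p\<close> strictly between \<open>\<beta>\<^sub>t\<^sub>+\<^sub>1\<close> and \<open>\<beta>\<^sub>t\<close>.
Hence \<open>\<lambda>\<close> has no removable \<open>p\<close>-rim hook and is its own \<open>p\<close>-core.\<close>

lemma rtranclp_intermediate_value:
  fixes f :: "'a \<Rightarrow> int"
  assumes "R\<^sup>*\<^sup>* x y" and "\<And>a b. R a b \<Longrightarrow> \<bar>f b - f a\<bar> \<le> 1 \<and> b \<in> S" and "x \<in> S"
    and "min (f x) (f y) \<le> v" and "v \<le> max (f x) (f y)"
  shows "\<exists>z\<in>S. f z = v"
  using assms(1,4,5)
proof (induction rule: rtranclp_induct)
  case base
  then show ?case using assms(3) by auto
next
  case (step y z)
  from assms(2)[OF step.hyps(2)] have z: "\<bar>f z - f y\<bar> \<le> 1" "z \<in> S" by auto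
  show ?case
  proof (cases "min (f x) (f y) \<le> v \<and> v \<le> max (f x) (f y)")
    case True
    then show ?thesis using step.IH by blast
  next
    case False
    then have "v = f z" using step.prems z(1) by (auto simp: min_def max_def split: if_splits)
    then show ?thesis using z(2) by blast
  qed
qed

lemma p_core_eq_self:
  assumes "\<not> (\<exists>mu. removes_rim_hook p la mu)"
  shows "p_core p la = la"
  unfolding p_core_def
proof (rule the_equality)
  show "core_of p la la" using assms by (rule stop)
next
  fix ka assume "core_of p la ka"
  then show "ka = la" by cases (use assms in auto)
qed

lemma part_antimono:
  assumes "is_partition la" and "x \<le> y"
  shows "part la (Suc y) \<le> part la (Suc x)"
  using assms unfolding is_partition_def part_def using sorted_rev_nth_mono by fastforce

lemma mem_young_iff: "(x, y) \<in> young la \<longleftrightarrow> y < part la (Suc x)"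
  unfolding young_def part_def by auto

lemma finite_young: "finite (young la)"
proof (rule finite_subset)
  show "young la \<subseteq> {..<length la} \<times> {..<Max (insert 0 (set la))}"
    unfolding young_def by (auto simp: less_le_trans[OF _ Max_ge])
qed simp

definition content :: "nat \<times> nat \<Rightarrow> int" where
  "content z = int (snd z) - int (fst z)"

lemma inj_on_content_skew:
  assumes la: "is_partition la" and mu: "is_partition mu"
    and no_square: "\<not> (\<exists>r c. (r, c) \<in> S \<and> (r, Suc c) \<in> S \<and> (Suc r, c) \<in> S \<and> (Suc r, Suc c) \<in> S)"
    and S: "S = young la - young mu"
  shows "inj_on content S"
proof -
  have lower_row: False
    if a: "(a, y) \<in> S" and b: "(b, y') \<in> S" and ab: "a < b" and "content (a, y) = content (b, y')"
    for a b y y'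
  \<comment> \<open>the cell \<open>(b, y')\<close> lies on the diagonal through \<open>(a, y)\<close>, so the square at \<open>(a, y)\<close> is in \<open>S\<close>\<close>
  proof -
    have y': "y' = y + (b - a)" using that unfolding content_def by simp
    have "part la (Suc b) \<le> part la (Suc (Suc a))" "part la (Suc (Suc a)) \<le> part la (Suc a)"
      "part mu (Suc (Suc a)) \<le> part mu (Suc a)"
      using part_antimono[OF la] part_antimono[OF mu] ab by auto
    with a b y' ab have "(a, y) \<in> S \<and> (a, Suc y) \<in> S \<and> (Suc a, y) \<in> S \<and> (Suc a, Suc y) \<in> S"
      unfolding S by (auto simp: mem_young_iff)
    with no_square show False by blast
  qed
  show ?thesis
  proof (rule inj_onI)
    fix u v assume "u \<in> S" "v \<in> S" "content u = content v"
    moreover obtain a y b y' where "u = (a, y)" "v = (b, y')" by fastforce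
    ultimately show "u = v"
      using lower_row[of a y b y'] lower_row[of b y' a y]
      by (cases a b rule: linorder_cases) (auto simp: content_def)
  qed
qed

lemma content_interval_subset:
  assumes conn: "\<forall>x\<in>S. \<forall>y\<in>S. (\<lambda>a b. a \<in> S \<and> b \<in> S \<and> cell_adj a b)\<^sup>*\<^sup>* x y"
    and "u \<in> S" and "w \<in> S"
  shows "{content u..content w} \<subseteq> content ` S"
proof
  fix v assume "v \<in> {content u..content w}"
  moreover have "\<bar>content b - content a\<bar> \<le> 1 \<and> b \<in> S"
    if "a \<in> S \<and> b \<in> S \<and> cell_adj a b" for a b
    using that unfolding cell_adj_def content_def by auto
  ultimately obtain z where "z \<in> S" "content z = v"
    using rtranclp_intermediate_value[of "\<lambda>a b. a \<in> S \<and> b \<in> S \<and> cell_adj a b" u w content S v]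
      conn assms(2,3) by auto
  then show "v \<in> content ` S" by blast
qed

lemma content_skew_subset:
  assumes la: "is_partition la" and mu: "is_partition mu" and S: "S = young la - young mu"
    and rows: "\<And>x y. (x, y) \<in> S \<Longrightarrow> r \<le> x \<and> x \<le> t"
  shows "content ` S \<subseteq> {int (part la (Suc (Suc t))) - int t..int (part la (Suc r)) - int r - 1}"
proof
  have mem: "(x, y) \<in> S \<longleftrightarrow> part mu (Suc x) \<le> y \<and> y < part la (Suc x)" for x y
    unfolding S by (auto simp: mem_young_iff)
  have below_rows: "part la (Suc (Suc t)) \<le> part mu (Suc (Suc t))"
  proof (rule ccontr)
    assume "\<not> ?thesis"
    then have "(Suc t, part mu (Suc (Suc t))) \<in> S" using mem by simp
    then show False using rows by fastforce
  qed
  fix z assume "z \<in> content ` S"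
  then obtain x y where xy: "(x, y) \<in> S" and z: "z = int y - int x"
    unfolding content_def by auto
  have "part mu (Suc (Suc t)) \<le> part mu (Suc x)" "part la (Suc x) \<le> part la (Suc r)"
    using rows[OF xy] part_antimono[OF mu] part_antimono[OF la] by auto
  then show "z \<in> {int (part la (Suc (Suc t))) - int t..int (part la (Suc r)) - int r - 1}"
    using xy mem rows[OF xy] below_rows unfolding z by auto
qed

lemma skew_extreme_rows:
  assumes "S = young la - young mu" and "S \<noteq> {}"
  obtains r t where "r \<le> t" and "(r, part la (Suc r) - 1) \<in> S" and "(t, part mu (Suc t)) \<in> S"
    and "\<And>x y. (x, y) \<in> S \<Longrightarrow> r \<le> x \<and> x \<le> t"
proof -
  have fin: "finite S" using finite_young assms(1) by auto
  have mem: "(x, y) \<in> S \<longleftrightarrow> part mu (Suc x) \<le> y \<and> y < part la (Suc x)" for x y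
    using assms(1) by (auto simp: mem_young_iff)
  define r where "r = Min (fst ` S)"
  define t where "t = Max (fst ` S)"
  have bounds: "r \<le> x \<and> x \<le> t" if "(x, y) \<in> S" for x y
  proof -
    have "x \<in> fst ` S" using that by force
    then show ?thesis unfolding r_def t_def using fin by simp
  qed
  have "r \<in> fst ` S" "t \<in> fst ` S" unfolding r_def t_def using fin assms(2) by simp_all
  then obtain y0 y1 where "(r, y0) \<in> S" "(t, y1) \<in> S" by force
  then have "(r, part la (Suc r) - 1) \<in> S" using mem by auto
  moreover have "(t, part mu (Suc t)) \<in> S" using \<open>(t, y1) \<in> S\<close> mem by auto
  ultimately show ?thesis using that bounds by blast
qed

text \<open>The hook occupies rows \<open>r..t\<close> (0-indexed). Writing \<open>h x = part la (Suc x) - x\<close>, so that the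
bead of row \<open>x\<close> sits at \<open>h x + s - 1\<close>, the conclusion reads \<open>h (t + 1) < h r - p < h t\<close>.\<close>

lemma removes_rim_hook_hook_lengths:
  assumes la: "is_partition la" and rh: "removes_rim_hook p la mu" and "0 < p"
  obtains r t where "r \<le> t" and "t < length la"
    and "int (part la (Suc (Suc t))) - int (Suc t) < int (part la (Suc r)) - int r - int p"
    and "int (part la (Suc r)) - int r - int p < int (part la (Suc t)) - int t"
proof -
  define S where "S = young la - young mu"
  have mu: "is_partition mu" and cS: "card S = p"
    and conn: "\<forall>x\<in>S. \<forall>y\<in>S. (\<lambda>a b. a \<in> S \<and> b \<in> S \<and> cell_adj a b)\<^sup>*\<^sup>* x y"
    and no_square: "\<not> (\<exists>r c. (r, c) \<in> S \<and> (r, Suc c) \<in> S \<and> (Suc r, c) \<in> S \<and> (Suc r, Suc c) \<in> S)"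
    using rh unfolding removes_rim_hook_def S_def Let_def by auto
  have mem: "(x, y) \<in> S \<longleftrightarrow> part mu (Suc x) \<le> y \<and> y < part la (Suc x)" for x y
    unfolding S_def by (auto simp: mem_young_iff)
  have fin: "finite S" using finite_young S_def by auto
  have card_content: "card (content ` S) = p"
    using card_image[OF inj_on_content_skew[OF la mu no_square S_def]] cS by simp
  have "S \<noteq> {}" using cS \<open>0 < p\<close> by auto
  then obtain r t where rt: "r \<le> t" and top: "(r, part la (Suc r) - 1) \<in> S"
    and bot: "(t, part mu (Suc t)) \<in> S" and rows: "\<And>x y. (x, y) \<in> S \<Longrightarrow> r \<le> x \<and> x \<le> t"
    using skew_extreme_rows[OF S_def] by blast
  define hi where "hi = int (part la (Suc r)) - int r - 1"
  have t_len: "t < length la" using bot unfolding S_def young_def by auto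
  have content_top: "content (r, part la (Suc r) - 1) = hi"
    using top mem unfolding content_def hi_def by auto
  have "p \<le> nat (hi - (int (part la (Suc (Suc t))) - int t) + 1)"
    using card_mono[OF _ content_skew_subset[OF la mu S_def rows]] card_content
    unfolding hi_def by simp
  then have "int p \<le> hi - (int (part la (Suc (Suc t))) - int t) + 1" using \<open>0 < p\<close> by arith
  moreover have "card {content (t, part mu (Suc t))..hi} \<le> p"
    using card_mono[OF _ content_interval_subset[OF conn bot top]] fin card_content content_top by simp
  then have "hi - content (t, part mu (Suc t)) + 1 \<le> int p" by simp
  moreover have "part mu (Suc t) < part la (Suc t)" using bot mem by simp
  ultimately show ?thesis using that rt t_len unfolding hi_def content_def by force
qed

lemma beads_eq_image: "beads la s = (\<lambda>x. part la (Suc x) + s - Suc x) ` {..<s}"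
proof -
  have "beads la s = (\<lambda>k. part la k + s - k) ` {1..s}" unfolding beads_def by auto
  also have "{1..s} = Suc ` {..<s}" by (simp add: image_Suc_lessThan)
  finally show ?thesis by (simp add: image_image)
qed

lemma occupied_iff: "occupied la s q \<longleftrightarrow> (\<exists>x<s. q = part la (Suc x) + s - Suc x)"
  unfolding occupied_def beads_eq_image by auto

lemma removes_rim_hook_empty_position:
  assumes "is_partition la" and "length la \<le> s" and "0 < p" and "removes_rim_hook p la mu"
  obtains b where "occupied la s b" and "p \<le> b" and "\<not> occupied la s (b - p)"
proof -
  obtain r t where rt: "r \<le> t" "t < length la"
    and below: "int (part la (Suc (Suc t))) - int (Suc t) < int (part la (Suc r)) - int r - int p"
    and above: "int (part la (Suc r)) - int r - int p < int (part la (Suc t)) - int t"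
    using removes_rim_hook_hook_lengths assms(1,3,4) by blast
  define b where "b = part la (Suc r) + s - Suc r"
  have "r < s" using rt assms(2) by simp
  then have b: "occupied la s b" "int b = int (part la (Suc r)) + int s - int r - 1"
    unfolding b_def occupied_iff by auto
  have "p \<le> b" using b(2) below rt assms(2) by linarith
  moreover have "\<not> occupied la s (b - p)"
  proof
    assume "occupied la s (b - p)"
    then obtain x where "x < s" "b - p = part la (Suc x) + s - Suc x" unfolding occupied_iff by blast
    then have x: "int b - int p = int (part la (Suc x)) + int s - int x - 1"
      using \<open>p \<le> b\<close> by (simp add: of_nat_diff)
    show False
    proof (cases "x \<le> t")
      case True
      then show False using part_antimono[OF assms(1) True] x b(2) above by linarith
    next
      case False
      then have tx: "Suc t \<le> x" by simp
      from part_antimono[OF assms(1) tx] show False using tx x b(2) below by linarith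
    qed
  qed
  ultimately show ?thesis using b(1) that by blast
qed

lemma occupied_diff_off_runners:
  assumes "F1 p la s i j" and "0 < p" and "b mod p \<notin> {i, j}"
    and "occupied la s b" and "p \<le> b"
  shows "occupied la s (b - p)"
proof (rule ccontr)
  assume empty: "\<not> occupied la s (b - p)"
  define t where "t = b mod p"
  have "runner_partition p la s t = []" using assms(1-3) unfolding F1_def t_def by auto
  then have "card {q. q < b \<and> q mod p = t \<and> \<not> occupied la s q} = 0"
    using assms(4) beads_eq_image[of la s]
    unfolding runner_partition_def filter_empty_conv occupied_def t_def by auto
  moreover have "b - p \<in> {q. q < b \<and> q mod p = t \<and> \<not> occupied la s q}"
    using empty assms(2,5) unfolding t_def by (auto simp: le_mod_geq)
  ultimately show False by (metis card_0_eq empty_iff finite_Collect_conjI finite_Collect_less_nat)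
qed

lemma occupied_diff_on_runner:
  assumes "F2 p la s i" and "F3 p la s i" and "2 \<le> p" and "i < p" and "b mod p = i"
    and "occupied la s b" and "p \<le> b"
  shows "occupied la s (b - p)"
proof (rule ccontr)
  assume empty: "\<not> occupied la s (b - p)"
  define a where "a = b div p - 1"
  have "1 \<le> b div p" using assms(3,7) by (simp add: Suc_le_eq div_greater_zero_iff)
  moreover have "b = b div p * p + i" using assms(5) div_mult_mod_eq[of b p] by simp
  ultimately have b: "b = i + (a + 1) * p" unfolding a_def by (simp add: algebra_simps)
  then have b_minus: "b - p = i + a * p" by simp
  \<comment> \<open>the position just above \<open>b - p\<close> is off runner \<open>i\<close> because \<open>p \<ge> 2\<close>\<close>
  have "(i + a * p + 1) mod p = (i + 1) mod p" by (simp add: add.commute add.left_commute)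
  also have "\<dots> \<noteq> i"
  proof (cases "i + 1 = p")
    case True
    then show ?thesis using assms(3) by simp
  next
    case False
    then show ?thesis using assms(4) by simp
  qed
  finally have off: "(i + a * p + 1) mod p \<noteq> i" .
  have "\<not> occupied la s (i + a * p + 1)"
    using assms(1) empty off unfolding F2_def b_minus by auto
  moreover have "i + a * p + 1 < i + (a + 1) * p" using assms(3) by simp
  then have "occupied la s (i + a * p + 1)"
    using assms(2,6) off b unfolding F3_def by metis
  ultimately show False by simp
qed

theorem lemma4p5:
  fixes p :: nat and la :: "nat list" and i j :: nat
  assumes "prime p" and "odd p"
    and "is_partition la"
    and "i < p" and "j < p"
    and "\<exists>s. length la \<le> s \<and> F1 p la s i j \<and> F2 p la s i \<and> F3 p la s j"
    and "p_core p la \<noteq> la"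
  shows "i \<noteq> j"
proof
  assume "i = j"
  obtain s where s: "length la \<le> s" "F1 p la s i i" "F2 p la s i" "F3 p la s i"
    using assms(6) \<open>i = j\<close> by blast
  have p2: "2 \<le> p" using assms(1) prime_ge_2_nat by blast
  have flush: "occupied la s (b - p)" if "occupied la s b" "p \<le> b" for b
    using occupied_diff_on_runner[OF s(3,4) p2 assms(4) _ that]
      occupied_diff_off_runners[OF s(2) _ _ that] p2 by fastforce
  have "\<not> removes_rim_hook p la mu" for mu
  proof
    assume "removes_rim_hook p la mu"
    moreover have "0 < p" using p2 by simp
    ultimately obtain b where "occupied la s b" "p \<le> b" "\<not> occupied la s (b - p)"
      using removes_rim_hook_empty_position[OF assms(3) s(1)] by blast
    with flush show False by blast
  qed
  then show False using p_core_eq_self assms(7) by blast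
qed

end
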